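(* Let $n \ge k \ge 1$ be integers and let $G$ be the digraph whose vertex set is $C = \{x \in \mathbb{Z}^k : x_i \ge 1 \text{ for all } i,\ \sum_{i=1}^k x_i = n\}$, with a directed edge from $x$ to $y$ whenever $y = x + \delta_i$ for some $i \in \{1,\dots,k\}$. Then $G$ is self-converse, i.e. $G$ is isomorphic to the digraph obtained from $G$ by reversing the direction of every edge.
   Context: For $i \in \{1,\dots,k\}$, $\delta_i \in \mathbb{Z}^k$ is the vector with entry $1$ in position $i$, entry $-1$ in position $i+1$ (taken mod $k$, so $\delta_k$ has $1$ in position $k$ and $-1$ in position $1$), and $0$ elsewhere. (Vertices of $G$ are the unblocked configurations of $k$ workers on a circle of $n$ bins, $x_i$ being the distance from worker $i$ to worker $i+1$; an edge $x \to x+\delta_i$ corresponds to worker $i+1$ advancing one bin by a single Bernoulli failure.) Two digraphs are isomorphic if there is a bijection between vertex sets such that $(u,v)$ is an edge of the first iff the image pair is an edge of the second. *)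

theory Defs
  imports Main
begin

(* Vectors in Z^k are represented as functions nat => int, with coordinates
   indexed 0..k-1 (coordinate i here = coordinate i+1 in the paper) and
   value 0 outside {0..<k}. *)

definition config_set :: "nat \<Rightarrow> nat \<Rightarrow> (nat \<Rightarrow> int) set" where
  "config_set n k = {x. (\<forall>i<k. x i \<ge> 1) \<and> (\<forall>i\<ge>k. x i = 0)
                         \<and> (\<Sum>i<k. x i) = int n}"

definition delta :: "nat \<Rightarrow> nat \<Rightarrow> (nat \<Rightarrow> int)" where
  "delta k i = (\<lambda>j. (if j = i then 1 else 0) - (if j = (i + 1) mod k then 1 else 0))"

definition G_edge :: "nat \<Rightarrow> nat \<Rightarrow> (nat \<Rightarrow> int) \<Rightarrow> (nat \<Rightarrow> int) \<Rightarrow> bool" where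
  "G_edge n k x y \<longleftrightarrow> x \<in> config_set n k \<and> y \<in> config_set n k \<and>
     (\<exists>i<k. y = (\<lambda>j. x j + delta k i j))"

definition digraph_iso :: "'a set \<Rightarrow> ('a \<Rightarrow> 'a \<Rightarrow> bool) \<Rightarrow> 'b set \<Rightarrow> ('b \<Rightarrow> 'b \<Rightarrow> bool) \<Rightarrow> bool" where
  "digraph_iso V E W F \<longleftrightarrow> (\<exists>f. bij_betw f V W \<and>
      (\<forall>u\<in>V. \<forall>v\<in>V. E u v \<longleftrightarrow> F (f u) (f v)))"

end

theory Submission
  imports Defs
begin

(* Reading the circle backwards, x \<mapsto> (x_k, ..., x_1), is an involution of C. It sends
   x + \<delta>_i to rev x - \<delta>_i' with i' = k - 1 - ((i + 1) mod k) in 0-based indices, since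
   the reversal maps the adjacent pair (i, i + 1) onto (i', i' + 1) in the opposite order.
   Hence it maps each edge x \<rightarrow> y to the edge rev y \<rightarrow> rev x. *)

definition rev_coords :: "nat \<Rightarrow> (nat \<Rightarrow> int) \<Rightarrow> (nat \<Rightarrow> int)" where
  "rev_coords k x = (\<lambda>j. if j < k then x (k - 1 - j) else 0)"

lemma digraph_iso_converseI:
  assumes "\<And>x. x \<in> V \<Longrightarrow> f x \<in> V"
    and "\<And>x. x \<in> V \<Longrightarrow> f (f x) = x"
    and "\<And>u v. u \<in> V \<Longrightarrow> v \<in> V \<Longrightarrow> E u v \<Longrightarrow> E (f v) (f u)"
  shows "digraph_iso V E V (\<lambda>u v. E v u)"
  unfolding digraph_iso_def
proof (intro exI conjI ballI)
  show "bij_betw f V V"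
    by (rule bij_betw_byWitness[where f'=f]) (use assms(1,2) in auto)
  show "E u v \<longleftrightarrow> E (f v) (f u)" if "u \<in> V" "v \<in> V" for u v
    using assms that by metis
qed

lemma rev_coords_rev_coords:
  assumes "\<And>j. j \<ge> k \<Longrightarrow> x j = 0"
  shows "rev_coords k (rev_coords k x) = x"
  using assms by (auto simp: rev_coords_def Suc_diff_Suc)

lemma rev_coords_add:
  "rev_coords k (\<lambda>j. x j + y j) = (\<lambda>j. rev_coords k x j + rev_coords k y j)"
  by (auto simp: rev_coords_def)

lemma sum_rev_coords: "(\<Sum>j<k. rev_coords k x j) = (\<Sum>j<k. x j)"
proof -
  have "(\<Sum>j<k. rev_coords k x j) = (\<Sum>j<k. x (k - 1 - j))"
    by (simp add: rev_coords_def)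
  also have "\<dots> = (\<Sum>j<k. x j)"
    by (rule sum.reindex_bij_witness[where i="\<lambda>j. k - 1 - j" and j="\<lambda>j. k - 1 - j"]) auto
  finally show ?thesis .
qed

lemma rev_coords_config_set:
  "x \<in> config_set n k \<Longrightarrow> rev_coords k x \<in> config_set n k"
  using sum_rev_coords[of k x] by (auto simp: config_set_def rev_coords_def)

lemma delta_eq_0_outside:
  assumes "i < k" "k \<le> j"
  shows "delta k i j = 0"
proof -
  have "Suc i mod k < k" using assms(1) by simp
  then have "j \<noteq> i" "j \<noteq> Suc i mod k" using assms by linarith+
  then show ?thesis by (simp add: delta_def)
qed

lemma Suc_mod_reflected_index:
  fixes i k :: nat
  assumes "i < k"
  shows "Suc (k - 1 - Suc i mod k) mod k = k - 1 - i"
proof (cases "Suc i = k")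
  case True
  then show ?thesis by simp
next
  case False
  then have "Suc i < k" using assms by simp
  then show ?thesis by (simp add: Suc_diff_Suc)
qed

lemma rev_coords_delta:
  assumes "i < k"
  shows "rev_coords k (delta k i) = (\<lambda>j. - delta k (k - 1 - Suc i mod k) j)"
proof
  fix j
  let ?i' = "k - 1 - Suc i mod k"
  have "?i' < k" using assms by simp
  show "rev_coords k (delta k i) j = - delta k ?i' j"
  proof (cases "j < k")
    case True
    have "(k - 1 - j = i) = (j = k - 1 - i)" "(k - 1 - j = Suc i mod k) = (j = ?i')"
      using True assms mod_less_divisor[of k "Suc i"] by linarith+
    then show ?thesis
      using True Suc_mod_reflected_index[OF assms] unfolding rev_coords_def delta_def by simp
  next
    case False
    then show ?thesis using assms \<open>?i' < k\<close> delta_eq_0_outside unfolding rev_coords_def by simp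
  qed
qed

lemma G_edge_rev_coords:
  assumes "G_edge n k x y"
  shows "G_edge n k (rev_coords k y) (rev_coords k x)"
proof -
  obtain i where x: "x \<in> config_set n k" and y: "y \<in> config_set n k"
    and "i < k" and y_eq: "y = (\<lambda>j. x j + delta k i j)"
    using assms unfolding G_edge_def by blast
  let ?i' = "k - 1 - Suc i mod k"
  have "rev_coords k y = (\<lambda>j. rev_coords k x j - delta k ?i' j)"
    unfolding y_eq rev_coords_add rev_coords_delta[OF \<open>i < k\<close>] by simp
  then have "rev_coords k x = (\<lambda>j. rev_coords k y j + delta k ?i' j)"
    by simp
  moreover have "?i' < k" using \<open>i < k\<close> by simp
  ultimately show ?thesis
    unfolding G_edge_def using rev_coords_config_set[OF x] rev_coords_config_set[OF y] by blast
qed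

theorem lemma2:
  fixes n k :: nat
  assumes "1 \<le> k" and "k \<le> n"
  shows "digraph_iso (config_set n k) (G_edge n k)
                     (config_set n k) (\<lambda>u v. G_edge n k v u)"
proof (rule digraph_iso_converseI)
  show "rev_coords k x \<in> config_set n k" if "x \<in> config_set n k" for x
    using that by (rule rev_coords_config_set)
  show "rev_coords k (rev_coords k x) = x" if "x \<in> config_set n k" for x
    using that by (intro rev_coords_rev_coords) (simp add: config_set_def)
  show "G_edge n k (rev_coords k y) (rev_coords k x)" if "x \<in> config_set n k" "y \<in> config_set n k" "G_edge n k x y" for x y
    using that(3) by (rule G_edge_rev_coords)
qed

end
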